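(* Let $G=(V,E)$ be a finite graph and suppose $r\in R(V)$ is an isoperimetric order on $V$ for $G$ which has initial-segment closure. Then \[ b(G) = \min_{r' \in R(V)} \max_{0 \le k \le |V|} |B_G(r'_k)|. \]
   Context: An order of $V$ is a bijection $r:V\to\{0,\ldots,|V|-1\}$; $R(V)$ denotes the set of all orders. For an order $r$ and $0\le k\le |V|$, the $k$-th initial segment is $r_k = r^{-1}(\{0,\ldots,k-1\})$. The graph bandwidth is $b(G)=\min_{r\in R(V)}\max_{\{v,w\}\in E}|r(v)-r(w)|$. For $W\subseteq V$, the vertex boundary $B_G(W)$ is the set of vertices in $V\setminus W$ adjacent to some vertex of $W$, and the vertex boundary closure is $C_G(W)=W\cup B_G(W)$. An order $r$ is an isoperimetric order on $V$ for $G$ if for every order $r'$ of $V$ and every $0\le k\le |V|$, $|B_G(r_k)|\le |B_G(r'_k)|$. An order $r$ has initial-segment closure if for every $k$, $C_G(r_k)$ is itself an initial segment of $r$ (i.e. equals $r_{k'}$ for some $k'$). *)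

theory Defs
  imports Main
begin

definition fin_graph :: "'a set \<Rightarrow> 'a set set \<Rightarrow> bool" where
  "fin_graph V E \<longleftrightarrow> finite V \<and>
     (\<forall>e\<in>E. \<exists>v w. e = {v, w} \<and> v \<noteq> w \<and> v \<in> V \<and> w \<in> V)"

definition is_order :: "'a set \<Rightarrow> ('a \<Rightarrow> nat) \<Rightarrow> bool" where
  "is_order V r \<longleftrightarrow> bij_betw r V {0..<card V}"

definition init_seg :: "'a set \<Rightarrow> ('a \<Rightarrow> nat) \<Rightarrow> nat \<Rightarrow> 'a set" where
  "init_seg V r k = {v \<in> V. r v < k}"

definition vboundary :: "'a set \<Rightarrow> 'a set set \<Rightarrow> 'a set \<Rightarrow> 'a set" where
  "vboundary V E W = {v \<in> V - W. \<exists>w\<in>W. {v, w} \<in> E}"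

definition vclosure :: "'a set \<Rightarrow> 'a set set \<Rightarrow> 'a set \<Rightarrow> 'a set" where
  "vclosure V E W = W \<union> vboundary V E W"

text \<open>Bandwidth; the max over an empty edge set is taken to be 0.\<close>
definition bandwidth :: "'a set \<Rightarrow> 'a set set \<Rightarrow> nat" where
  "bandwidth V E = Min ((\<lambda>r. Max (insert 0
       {nat \<bar>int (r v) - int (r w)\<bar> | v w. {v, w} \<in> E})) ` {r. is_order V r})"

definition isoperimetric_order :: "'a set \<Rightarrow> 'a set set \<Rightarrow> ('a \<Rightarrow> nat) \<Rightarrow> bool" where
  "isoperimetric_order V E r \<longleftrightarrow> is_order V r \<and>
     (\<forall>r'. is_order V r' \<longrightarrow> (\<forall>k \<le> card V.
        card (vboundary V E (init_seg V r k)) \<le> card (vboundary V E (init_seg V r' k))))"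

definition initial_segment_closure :: "'a set \<Rightarrow> 'a set set \<Rightarrow> ('a \<Rightarrow> nat) \<Rightarrow> bool" where
  "initial_segment_closure V E r \<longleftrightarrow>
     (\<forall>k \<le> card V. \<exists>k' \<le> card V. vclosure V E (init_seg V r k) = init_seg V r k')"

end

theory Submission
  imports Defs
begin

text \<open>Every boundary vertex of the initial segment r_k of an order r is joined to a vertex at a
  position below k, so it occupies one of the positions k, ..., k + w - 1, where w is the
  bandwidth of r; hence no initial segment of r has more than w boundary vertices. An
  isoperimetric order r minimises the largest such boundary over all orders. If moreover the
  closure of each r_k is an initial segment, it must be r_(k + |B(r_k)|); for an edge vw with
  r v < r w the vertex w lies in the boundary of r_(r v + 1), so r w - r v is at most that
  boundary size. So the bandwidth of r equals its largest boundary, and both minima are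
  attained at r.\<close>

definition order_bandwidth :: "'a set \<Rightarrow> 'a set set \<Rightarrow> ('a \<Rightarrow> nat) \<Rightarrow> nat" where
  "order_bandwidth V E r = Max (insert 0 {nat \<bar>int (r v) - int (r w)\<bar> | v w. {v, w} \<in> E})"

definition max_seg_boundary :: "'a set \<Rightarrow> 'a set set \<Rightarrow> ('a \<Rightarrow> nat) \<Rightarrow> nat" where
  "max_seg_boundary V E r = Max ((\<lambda>k. card (vboundary V E (init_seg V r k))) ` {0..card V})"

lemma bandwidth_eq_Min_order_bandwidth:
  "bandwidth V E = Min (order_bandwidth V E ` {r. is_order V r})"
  by (simp add: bandwidth_def order_bandwidth_def)

lemma fin_graph_edge_vertices:
  assumes "fin_graph V E" "{v, w} \<in> E"
  shows "v \<in> V" "w \<in> V"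
  using assms by (auto simp: fin_graph_def doubleton_eq_iff)

lemma order_less_card:
  assumes "is_order V r" "v \<in> V"
  shows "r v < card V"
  using assms by (auto simp: is_order_def bij_betw_def)

lemma card_init_seg:
  assumes "is_order V r" "k \<le> card V"
  shows "card (init_seg V r k) = k"
proof -
  have img: "r ` V = {0..<card V}" and inj: "inj_on r V"
    using assms(1) by (auto simp: is_order_def bij_betw_def)
  have "r ` init_seg V r k = {0..<k}"
  proof
    show "{0..<k} \<subseteq> r ` init_seg V r k"
      using img assms(2) by (force simp: init_seg_def)
  qed (auto simp: init_seg_def)
  moreover have "inj_on r (init_seg V r k)"
    using inj by (rule inj_on_subset) (auto simp: init_seg_def)
  ultimately show ?thesis
    by (metis card_atLeastLessThan card_image diff_zero)
qed

lemma card_order_preimage_interval: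
  assumes "is_order V r"
  shows "card {v \<in> V. a \<le> r v \<and> r v < b} \<le> b - a"
proof -
  have inj: "inj_on r V"
    using assms by (simp add: is_order_def bij_betw_def)
  have "card {v \<in> V. a \<le> r v \<and> r v < b} \<le> card {a..<b}"
    by (rule card_inj_on_le) (auto intro: inj_on_subset[OF inj])
  then show ?thesis
    by simp
qed

lemma finite_edge_stretches:
  assumes "fin_graph V E"
  shows "finite {nat \<bar>int (r v) - int (r w)\<bar> | v w. {v, w} \<in> E}"
proof (rule finite_subset)
  show "{nat \<bar>int (r v) - int (r w)\<bar> | v w. {v, w} \<in> E}
      \<subseteq> (\<lambda>(v, w). nat \<bar>int (r v) - int (r w)\<bar>) ` (V \<times> V)"
  proof
    fix x
    assume "x \<in> {nat \<bar>int (r v) - int (r w)\<bar> | v w. {v, w} \<in> E}"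
    then obtain v w where "{v, w} \<in> E" "x = nat \<bar>int (r v) - int (r w)\<bar>"
      by blast
    then show "x \<in> (\<lambda>(v, w). nat \<bar>int (r v) - int (r w)\<bar>) ` (V \<times> V)"
      using fin_graph_edge_vertices[OF assms] by (intro image_eqI[where x = "(v, w)"]) auto
  qed
  show "finite ((\<lambda>(v, w). nat \<bar>int (r v) - int (r w)\<bar>) ` (V \<times> V))"
    using assms by (simp add: fin_graph_def)
qed

lemma order_bandwidth_le_iff:
  assumes "fin_graph V E"
  shows "order_bandwidth V E r \<le> m \<longleftrightarrow>
    (\<forall>v w. {v, w} \<in> E \<longrightarrow> nat \<bar>int (r v) - int (r w)\<bar> \<le> m)"
  using finite_edge_stretches[OF assms] by (auto simp: order_bandwidth_def)

lemma edge_stretch_le_order_bandwidth: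
  assumes "fin_graph V E" "{v, w} \<in> E"
  shows "nat \<bar>int (r v) - int (r w)\<bar> \<le> order_bandwidth V E r"
  using order_bandwidth_le_iff[OF assms(1)] assms(2) by blast

lemma order_bandwidth_le_card:
  assumes "fin_graph V E" "is_order V r"
  shows "order_bandwidth V E r \<le> card V"
  unfolding order_bandwidth_le_iff[OF assms(1)]
proof (intro allI impI)
  fix v w
  assume "{v, w} \<in> E"
  then have "r v < card V" "r w < card V"
    using fin_graph_edge_vertices[OF assms(1)] order_less_card[OF assms(2)] by blast+
  then show "nat \<bar>int (r v) - int (r w)\<bar> \<le> card V"
    by linarith
qed

lemma max_seg_boundary_le_iff:
  "max_seg_boundary V E r \<le> m \<longleftrightarrow>
    (\<forall>k \<le> card V. card (vboundary V E (init_seg V r k)) \<le> m)"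
  by (auto simp: max_seg_boundary_def)

lemma card_vboundary_le_max_seg_boundary:
  assumes "k \<le> card V"
  shows "card (vboundary V E (init_seg V r k)) \<le> max_seg_boundary V E r"
  using assms max_seg_boundary_le_iff by blast

lemma max_seg_boundary_le_card:
  assumes "finite V"
  shows "max_seg_boundary V E r \<le> card V"
  unfolding max_seg_boundary_le_iff
proof (intro allI impI)
  fix k
  show "card (vboundary V E (init_seg V r k)) \<le> card V"
    using assms by (intro card_mono) (auto simp: vboundary_def)
qed

lemma vboundary_init_seg_subset:
  assumes "fin_graph V E"
  shows "vboundary V E (init_seg V r k)
    \<subseteq> {v \<in> V. k \<le> r v \<and> r v < k + order_bandwidth V E r}"
proof
  fix v
  assume "v \<in> vboundary V E (init_seg V r k)"
  then obtain w where v: "v \<in> V" "k \<le> r v" and w: "r w < k" "{v, w} \<in> E"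
    by (auto simp: vboundary_def init_seg_def)
  have "nat \<bar>int (r v) - int (r w)\<bar> \<le> order_bandwidth V E r"
    using edge_stretch_le_order_bandwidth[OF assms w(2)] .
  with v w(1) show "v \<in> {v \<in> V. k \<le> r v \<and> r v < k + order_bandwidth V E r}"
    by auto
qed

lemma max_seg_boundary_le_order_bandwidth:
  assumes "fin_graph V E" "is_order V r"
  shows "max_seg_boundary V E r \<le> order_bandwidth V E r"
  unfolding max_seg_boundary_le_iff
proof (intro allI impI)
  fix k
  have "finite V"
    using assms(1) by (simp add: fin_graph_def)
  then have "card (vboundary V E (init_seg V r k))
      \<le> card {v \<in> V. k \<le> r v \<and> r v < k + order_bandwidth V E r}"
    by (intro card_mono vboundary_init_seg_subset[OF assms(1)]) auto
  also have "\<dots> \<le> order_bandwidth V E r"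
    using card_order_preimage_interval[OF assms(2)] by (metis add_diff_cancel_left')
  finally show "card (vboundary V E (init_seg V r k)) \<le> order_bandwidth V E r" .
qed

lemma isoperimetric_order_max_seg_boundary_le:
  assumes "isoperimetric_order V E r" "is_order V r'"
  shows "max_seg_boundary V E r \<le> max_seg_boundary V E r'"
  unfolding max_seg_boundary_le_iff
proof (intro allI impI)
  fix k
  assume k: "k \<le> card V"
  then have "card (vboundary V E (init_seg V r k)) \<le> card (vboundary V E (init_seg V r' k))"
    using assms by (simp add: isoperimetric_order_def)
  also have "\<dots> \<le> max_seg_boundary V E r'"
    using k by (rule card_vboundary_le_max_seg_boundary)
  finally show "card (vboundary V E (init_seg V r k)) \<le> max_seg_boundary V E r'" .
qed

lemma card_vclosure_init_seg:
  assumes "finite V" "is_order V r" "k \<le> card V"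
  shows "card (vclosure V E (init_seg V r k)) = k + card (vboundary V E (init_seg V r k))"
proof -
  have "card (init_seg V r k \<union> vboundary V E (init_seg V r k))
      = card (init_seg V r k) + card (vboundary V E (init_seg V r k))"
    using assms(1) by (intro card_Un_disjoint) (auto simp: vboundary_def init_seg_def)
  then show ?thesis
    by (simp add: vclosure_def card_init_seg[OF assms(2,3)])
qed

lemma vclosure_init_seg_index:
  assumes "finite V" "is_order V r" "k \<le> card V" "k' \<le> card V"
    and "vclosure V E (init_seg V r k) = init_seg V r k'"
  shows "k' = k + card (vboundary V E (init_seg V r k))"
  using card_vclosure_init_seg[OF assms(1-3), of E] card_init_seg[OF assms(2,4)] assms(5)
  by simp

lemma order_bandwidth_le_max_seg_boundary:
  assumes "fin_graph V E" "is_order V r" "initial_segment_closure V E r"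
  shows "order_bandwidth V E r \<le> max_seg_boundary V E r"
proof -
  have stretch: "r w - r v \<le> max_seg_boundary V E r"
    if e: "{v, w} \<in> E" and lt: "r v < r w" for v w
  proof -
    define k where "k = Suc (r v)"
    have "w \<in> V"
      using fin_graph_edge_vertices[OF assms(1) e] by simp
    then have k: "k \<le> card V"
      using order_less_card[OF assms(2)] lt by (simp add: k_def Suc_le_eq less_trans)
    then obtain k' where k': "k' \<le> card V" "vclosure V E (init_seg V r k) = init_seg V r k'"
      using assms(3) by (auto simp: initial_segment_closure_def)
    have "w \<in> vboundary V E (init_seg V r k)"
      using \<open>w \<in> V\<close> e lt fin_graph_edge_vertices[OF assms(1) e]
      by (auto simp: vboundary_def init_seg_def k_def insert_commute)
    then have "r w < k'"
      using k'(2) by (auto simp: vclosure_def init_seg_def)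
    moreover have "k' = k + card (vboundary V E (init_seg V r k))"
      using assms(1,2) k k' by (intro vclosure_init_seg_index) (auto simp: fin_graph_def)
    moreover have "card (vboundary V E (init_seg V r k)) \<le> max_seg_boundary V E r"
      using k by (rule card_vboundary_le_max_seg_boundary)
    ultimately show ?thesis
      by (simp add: k_def)
  qed
  show ?thesis
    unfolding order_bandwidth_le_iff[OF assms(1)]
  proof (intro allI impI)
    fix v w
    assume e: "{v, w} \<in> E"
    then have e': "{w, v} \<in> E"
      by (simp add: insert_commute)
    consider "r v < r w" | "r w < r v" | "r v = r w"
      by linarith
    then show "nat \<bar>int (r v) - int (r w)\<bar> \<le> max_seg_boundary V E r"
      by cases (use stretch[OF e] stretch[OF e'] in auto)
  qed
qed

lemma Min_image_eq_attained:
  fixes f :: "'a \<Rightarrow> nat"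
  assumes "\<And>y. y \<in> A \<Longrightarrow> f y \<le> c" "x \<in> A" "\<And>y. y \<in> A \<Longrightarrow> f x \<le> f y"
  shows "Min (f ` A) = f x"
proof (rule Min_eqI)
  have "f ` A \<subseteq> {..c}"
    using assms(1) by blast
  then show "finite (f ` A)"
    by (rule finite_subset) simp
  show "\<And>y. y \<in> f ` A \<Longrightarrow> f x \<le> y"
    using assms(3) by blast
  show "f x \<in> f ` A"
    using assms(2) by blast
qed

theorem lemma3:
  assumes "fin_graph V E"
    and "isoperimetric_order V E r"
    and "initial_segment_closure V E r"
  shows "bandwidth V E =
    Min ((\<lambda>r'. Max ((\<lambda>k. card (vboundary V E (init_seg V r' k))) ` {0..card V}))
           ` {r'. is_order V r'})"
proof -
  have r: "is_order V r"
    using assms(2) by (simp add: isoperimetric_order_def)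
  have finite: "finite V"
    using assms(1) by (simp add: fin_graph_def)
  have optimal: "max_seg_boundary V E r \<le> max_seg_boundary V E r'" if "is_order V r'" for r'
    using isoperimetric_order_max_seg_boundary_le[OF assms(2) that] .
  have bw_r: "order_bandwidth V E r = max_seg_boundary V E r"
    using max_seg_boundary_le_order_bandwidth[OF assms(1) r]
      order_bandwidth_le_max_seg_boundary[OF assms(1) r assms(3)] by simp
  have "bandwidth V E = order_bandwidth V E r"
    unfolding bandwidth_eq_Min_order_bandwidth
  proof (rule Min_image_eq_attained)
    fix r'
    assume "r' \<in> {r'. is_order V r'}"
    then have r': "is_order V r'"
      by simp
    show "order_bandwidth V E r' \<le> card V"
      using order_bandwidth_le_card[OF assms(1) r'] .
    show "order_bandwidth V E r \<le> order_bandwidth V E r'"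
      using bw_r optimal[OF r'] max_seg_boundary_le_order_bandwidth[OF assms(1) r'] by simp
  qed (use r in simp)
  also have "\<dots> = Min (max_seg_boundary V E ` {r'. is_order V r'})"
    using Min_image_eq_attained[of "{r'. is_order V r'}" "max_seg_boundary V E" "card V" r]
      max_seg_boundary_le_card[OF finite] r optimal bw_r by simp
  finally show ?thesis
    by (simp add: max_seg_boundary_def)
qed

end
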